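(* Let $M$ be a finite regular cell complex with cell weights $w_\sigma>0$. For every function $f$ on $M$ (i.e. combinatorial $0$-form), $$\int_M\Delta f=0.$$
   Context: $C_*(M)$ is the real cellular chain complex with boundary $\partial$, cells oriented, and inner product $\langle\sigma,\sigma'\rangle=\delta_{\sigma,\sigma'}w_\sigma$. A combinatorial differential $d$-form is a linear map $\omega:C_*(M)\to C_*(M)$ with $\omega(C_p)\subset C_{p-d}$ such that $\omega(\alpha)$ is a combination of $(p-d)$-dimensional faces of each $p$-cell $\alpha$; $\Omega^d(M)$ is their space. A function $f$ is a $0$-form, $f(\sigma)=f_\sigma\sigma$, and we write $f(\sigma)$ for $f_\sigma$. The differential is $d\omega=\partial\circ\omega-(-1)^d\omega\circ\partial$; $\Omega^*(M)$ carries the inner product $\langle u,v\rangle=\sum_\sigma\frac1{w_\sigma}\langle u(\sigma),v(\sigma)\rangle$, $d^*$ is the adjoint of $d$, and $\Delta=dd^*+d^*d$. Thus $\Delta f$ is again a $0$-form, i.e. a function. For a function $h$, $\int_M h=\sum_\sigma h(\sigma)$ over all cells of $M$. *)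

theory Defs
  imports Complex_Main
begin

text \<open>A finite regular cell complex, given combinatorially: a finite set C of cells,
a dimension function, the face relation (face b a: b is a face of a, including a itself)
and the incidence numbers inc a b = [a:b] of the cellular boundary
(boundary a = sum over b of inc a b times b), with respect to fixed orientations.\<close>

definition regular_cell_complex ::
  "'c set \<Rightarrow> ('c \<Rightarrow> nat) \<Rightarrow> ('c \<Rightarrow> 'c \<Rightarrow> bool) \<Rightarrow> ('c \<Rightarrow> 'c \<Rightarrow> real) \<Rightarrow> bool" where
  "regular_cell_complex C dm face inc \<longleftrightarrow>
     finite C \<and>
     (\<forall>a b. face b a \<longrightarrow> a \<in> C \<and> b \<in> C) \<and>
     (\<forall>a\<in>C. face a a) \<and>
     (\<forall>a b c. face c b \<longrightarrow> face b a \<longrightarrow> face c a) \<and>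
     (\<forall>a b. face b a \<longrightarrow> face a b \<longrightarrow> a = b) \<and>
     (\<forall>a b. face b a \<longrightarrow> dm b \<le> dm a) \<and>
     (\<forall>a b. face b a \<longrightarrow> dm b = dm a \<longrightarrow> a = b) \<and>
     (\<forall>a b. inc a b \<noteq> 0 \<longleftrightarrow> (face b a \<and> dm a = dm b + 1)) \<and>
     (\<forall>a b. inc a b \<noteq> 0 \<longrightarrow> inc a b = 1 \<or> inc a b = -1) \<and>
     (\<forall>a c. (\<Sum>b\<in>C. inc a b * inc b c) = 0)"

text \<open>Linear maps on chains are represented by their matrices w.r.t. the cell basis:
omega(a) = sum over b of om a b times b.\<close>

definition is_form ::
  "'c set \<Rightarrow> ('c \<Rightarrow> nat) \<Rightarrow> ('c \<Rightarrow> 'c \<Rightarrow> bool) \<Rightarrow> nat \<Rightarrow> ('c \<Rightarrow> 'c \<Rightarrow> real) \<Rightarrow> bool" where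
  "is_form C dm face d om \<longleftrightarrow>
     (\<forall>a b. om a b \<noteq> 0 \<longrightarrow> a \<in> C \<and> b \<in> C \<and> face b a \<and> dm a = dm b + d)"

definition comp_map :: "'c set \<Rightarrow> ('c \<Rightarrow> 'c \<Rightarrow> real) \<Rightarrow> ('c \<Rightarrow> 'c \<Rightarrow> real) \<Rightarrow> ('c \<Rightarrow> 'c \<Rightarrow> real)" where
  "comp_map C om eta = (\<lambda>a c. \<Sum>b\<in>C. eta a b * om b c)"

definition dform :: "'c set \<Rightarrow> ('c \<Rightarrow> 'c \<Rightarrow> real) \<Rightarrow> nat \<Rightarrow> ('c \<Rightarrow> 'c \<Rightarrow> real) \<Rightarrow> ('c \<Rightarrow> 'c \<Rightarrow> real)" where
  "dform C inc d om = (\<lambda>a c. comp_map C inc om a c - (-1)^d * comp_map C om inc a c)"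

text \<open>Inner product of forms: sum over sigma of (1/w sigma) <u(sigma), v(sigma)>,
with <tau,tau'> = delta w tau on chains.\<close>
definition form_inner :: "'c set \<Rightarrow> ('c \<Rightarrow> real) \<Rightarrow> ('c \<Rightarrow> 'c \<Rightarrow> real) \<Rightarrow> ('c \<Rightarrow> 'c \<Rightarrow> real) \<Rightarrow> real" where
  "form_inner C w u v = (\<Sum>s\<in>C. (1 / w s) * (\<Sum>t\<in>C. u s t * v s t * w t))"

definition codiff ::
  "'c set \<Rightarrow> ('c \<Rightarrow> nat) \<Rightarrow> ('c \<Rightarrow> 'c \<Rightarrow> bool) \<Rightarrow> ('c \<Rightarrow> 'c \<Rightarrow> real) \<Rightarrow> ('c \<Rightarrow> real)
     \<Rightarrow> nat \<Rightarrow> ('c \<Rightarrow> 'c \<Rightarrow> real) \<Rightarrow> ('c \<Rightarrow> 'c \<Rightarrow> real)" where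
  "codiff C dm face inc w k v =
     (THE u. is_form C dm face k u \<and>
        (\<forall>x. is_form C dm face k x \<longrightarrow>
              form_inner C w (dform C inc k x) v = form_inner C w x u))"

text \<open>Hodge Laplacian on Omega^k: d d^* + d^* d (d^* on Omega^0 is the zero map,
Omega^(-1) being zero).\<close>
definition laplacian ::
  "'c set \<Rightarrow> ('c \<Rightarrow> nat) \<Rightarrow> ('c \<Rightarrow> 'c \<Rightarrow> bool) \<Rightarrow> ('c \<Rightarrow> 'c \<Rightarrow> real) \<Rightarrow> ('c \<Rightarrow> real)
     \<Rightarrow> nat \<Rightarrow> ('c \<Rightarrow> 'c \<Rightarrow> real) \<Rightarrow> ('c \<Rightarrow> 'c \<Rightarrow> real)" where
  "laplacian C dm face inc w k om =
     (\<lambda>a c. (if k = 0 then 0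
             else dform C inc (k - 1) (codiff C dm face inc w (k - 1) om) a c)
           + codiff C dm face inc w k (dform C inc k om) a c)"

text \<open>A function f as a 0-form: f(sigma) = f sigma * sigma.\<close>
definition fun_form :: "'c set \<Rightarrow> ('c \<Rightarrow> real) \<Rightarrow> ('c \<Rightarrow> 'c \<Rightarrow> real)" where
  "fun_form C f = (\<lambda>a b. if a = b \<and> a \<in> C then f a else 0)"

definition integral0 :: "'c set \<Rightarrow> ('c \<Rightarrow> 'c \<Rightarrow> real) \<Rightarrow> real" where
  "integral0 C h = (\<Sum>s\<in>C. h s s)"

end

theory Submission
  imports Defs
begin

text \<open>The integral of a function h is the inner product of h with the constant function 1, so
  \<open>\<integral>\<Delta>f = \<langle>1, d*df\<rangle> = \<langle>d1, df\<rangle>\<close> (on functions \<open>\<Delta> = d*d\<close>), and \<open>d1 = 0\<close> because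
  \<open>(dg)(\<sigma>) = \<Sum>\<^sub>\<tau> [\<sigma>:\<tau>] (g(\<sigma>) - g(\<tau>)) \<tau>\<close> vanishes for constant g. Positivity of the weights
  makes the inner product on 0-forms nondegenerate, so that d* is well defined on 1-forms.\<close>

lemma regular_cell_complex_finite:
  "regular_cell_complex C dm face inc \<Longrightarrow> finite C"
  unfolding regular_cell_complex_def by blast

lemma regular_cell_complex_face_refl:
  "regular_cell_complex C dm face inc \<Longrightarrow> a \<in> C \<Longrightarrow> face a a"
  unfolding regular_cell_complex_def by blast

lemma regular_cell_complex_face_dim_eq:
  "regular_cell_complex C dm face inc \<Longrightarrow> face b a \<Longrightarrow> dm b = dm a \<Longrightarrow> a = b"
  unfolding regular_cell_complex_def by metis

lemma regular_cell_complex_inc_in: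
  "regular_cell_complex C dm face inc \<Longrightarrow> inc a b \<noteq> 0 \<Longrightarrow> a \<in> C \<and> b \<in> C"
  unfolding regular_cell_complex_def by metis

lemma is_form_fun_form:
  "regular_cell_complex C dm face inc \<Longrightarrow> is_form C dm face 0 (fun_form C g)"
  unfolding is_form_def fun_form_def by (auto intro: regular_cell_complex_face_refl)

lemma zero_form_eq_fun_form:
  assumes R: "regular_cell_complex C dm face inc" and x: "is_form C dm face 0 x"
  shows "x = fun_form C (\<lambda>a. x a a)"
proof (intro ext)
  fix a b
  show "x a b = fun_form C (\<lambda>a. x a a) a b"
  proof (cases "x a b = 0")
    case False
    then have "a \<in> C" "face b a" "dm b = dm a"
      using x unfolding is_form_def by auto
    then show ?thesis
      using regular_cell_complex_face_dim_eq[OF R] by (auto simp: fun_form_def)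
  next
    case True
    then show ?thesis by (auto simp: fun_form_def)
  qed
qed

lemma sum_fun_form_right:
  "finite C \<Longrightarrow> (\<Sum>t\<in>C. fun_form C g s t * h t) = (if s \<in> C then g s * h s else 0)"
  by (simp add: fun_form_def if_distrib[of "\<lambda>z. z * _"] cong: if_cong)

lemma sum_fun_form_left:
  "finite C \<Longrightarrow> (\<Sum>b\<in>C. h b * fun_form C g b t) = (if t \<in> C then h t * g t else 0)"
  by (simp add: fun_form_def if_distrib[of "\<lambda>z. _ * z"] cong: if_cong)

lemma dform_fun_form:
  assumes R: "regular_cell_complex C dm face inc"
  shows "dform C inc 0 (fun_form C g) s t = inc s t * (g s - g t)"
proof -
  have "comp_map C inc (fun_form C g) s t = g s * inc s t"
    using regular_cell_complex_inc_in[OF R, of s t]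
    by (auto simp: comp_map_def regular_cell_complex_finite[OF R] sum_fun_form_right)
  moreover have "comp_map C (fun_form C g) inc s t = inc s t * g t"
    using regular_cell_complex_inc_in[OF R, of s t]
    by (auto simp: comp_map_def regular_cell_complex_finite[OF R] sum_fun_form_left)
  ultimately show ?thesis
    by (simp add: dform_def algebra_simps)
qed

lemma form_inner_fun_form:
  assumes R: "regular_cell_complex C dm face inc" and W: "\<forall>s\<in>C. w s > 0"
  shows "form_inner C w (fun_form C g) u = (\<Sum>s\<in>C. g s * u s s)"
  unfolding form_inner_def
  by (rule sum.cong[OF refl])
    (use W in \<open>auto simp: mult.assoc regular_cell_complex_finite[OF R] sum_fun_form_right\<close>)

lemma zero_form_adjoint_exists:
  assumes R: "regular_cell_complex C dm face inc" and W: "\<forall>s\<in>C. w s > 0"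
  shows "\<exists>u. is_form C dm face 0 u \<and>
           (\<forall>x. is_form C dm face 0 x \<longrightarrow>
                  form_inner C w (dform C inc 0 x) v = form_inner C w x u)"
proof (intro exI conjI allI impI)
  define U where "U a = (\<Sum>t\<in>C. (w t / w a) * inc a t * v a t)
                        - (\<Sum>s\<in>C. (w a / w s) * inc s a * v s a)" for a
  show "is_form C dm face 0 (fun_form C U)"
    using R by (rule is_form_fun_form)
  fix x assume "is_form C dm face 0 x"
  then obtain g where x: "x = fun_form C g"
    using zero_form_eq_fun_form[OF R] by blast
  have "form_inner C w (dform C inc 0 x) v =
          (\<Sum>s\<in>C. \<Sum>t\<in>C. (w t / w s) * inc s t * v s t * g s)
        - (\<Sum>s\<in>C. \<Sum>t\<in>C. (w t / w s) * inc s t * v s t * g t)"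
    unfolding form_inner_def x dform_fun_form[OF R] sum_subtractf[symmetric] sum_distrib_left
    by (intro sum.cong refl) (simp add: algebra_simps)
  also have "\<dots> = (\<Sum>s\<in>C. \<Sum>t\<in>C. (w t / w s) * inc s t * v s t * g s)
                - (\<Sum>t\<in>C. \<Sum>s\<in>C. (w t / w s) * inc s t * v s t * g t)"
    using sum.swap[of "\<lambda>s t. (w t / w s) * inc s t * v s t * g t" C C] by simp
  also have "\<dots> = (\<Sum>a\<in>C. g a * U a)"
    unfolding U_def sum_subtractf[symmetric] right_diff_distrib sum_distrib_left
    by (intro sum.cong refl) (simp add: algebra_simps)
  also have "\<dots> = form_inner C w x (fun_form C U)"
    unfolding x form_inner_fun_form[OF R W] by (simp add: fun_form_def)
  finally show "form_inner C w (dform C inc 0 x) v = form_inner C w x (fun_form C U)" .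
qed

lemma zero_form_eqI:
  assumes R: "regular_cell_complex C dm face inc" and W: "\<forall>s\<in>C. w s > 0"
    and y: "is_form C dm face 0 y" and u: "is_form C dm face 0 u"
    and inner: "\<And>x. is_form C dm face 0 x \<Longrightarrow> form_inner C w x y = form_inner C w x u"
  shows "y = u"
proof -
  have "y a a = u a a" if a: "a \<in> C" for a
  proof -
    have "form_inner C w (fun_form C (\<lambda>s. if s = a then 1 else 0)) y
        = form_inner C w (fun_form C (\<lambda>s. if s = a then 1 else 0)) u"
      by (rule inner[OF is_form_fun_form[OF R]])
    then show ?thesis
      using a by (simp add: form_inner_fun_form[OF R W] regular_cell_complex_finite[OF R]
                    if_distrib[of "\<lambda>z. z * _"] cong: if_cong)
  qed
  then have "fun_form C (\<lambda>a. y a a) = fun_form C (\<lambda>a. u a a)"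
    by (intro ext) (auto simp: fun_form_def)
  then show ?thesis
    using zero_form_eq_fun_form[OF R y] zero_form_eq_fun_form[OF R u] by simp
qed

lemma codiff_zero_form_adjoint:
  assumes R: "regular_cell_complex C dm face inc" and W: "\<forall>s\<in>C. w s > 0"
    and x: "is_form C dm face 0 x"
  shows "form_inner C w (dform C inc 0 x) v = form_inner C w x (codiff C dm face inc w 0 v)"
proof -
  let ?adjoint = "\<lambda>u. is_form C dm face 0 u \<and>
           (\<forall>x. is_form C dm face 0 x \<longrightarrow>
                  form_inner C w (dform C inc 0 x) v = form_inner C w x u)"
  have "\<exists>!u. ?adjoint u"
    using zero_form_adjoint_exists[OF R W] zero_form_eqI[OF R W] by metis
  then have "?adjoint (codiff C dm face inc w 0 v)"
    unfolding codiff_def by (rule theI')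
  then show ?thesis using x by blast
qed

theorem corollary3p6:
  fixes C :: "'c set" and dm :: "'c \<Rightarrow> nat" and face :: "'c \<Rightarrow> 'c \<Rightarrow> bool"
    and inc :: "'c \<Rightarrow> 'c \<Rightarrow> real" and w :: "'c \<Rightarrow> real" and f :: "'c \<Rightarrow> real"
  assumes "regular_cell_complex C dm face inc"
    and "\<forall>s\<in>C. w s > 0"
  shows "integral0 C (laplacian C dm face inc w 0 (fun_form C f)) = 0"
proof -
  note R = assms(1) and W = assms(2)
  define one :: "'c \<Rightarrow> 'c \<Rightarrow> real" where "one = fun_form C (\<lambda>_. 1)"
  define df where "df = dform C inc 0 (fun_form C f)"
  have "integral0 C (laplacian C dm face inc w 0 (fun_form C f))
          = form_inner C w one (codiff C dm face inc w 0 df)"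
    by (simp add: integral0_def laplacian_def df_def one_def form_inner_fun_form[OF R W])
  also have "\<dots> = form_inner C w (dform C inc 0 one) df"
    using codiff_zero_form_adjoint[OF R W is_form_fun_form[OF R]] by (simp add: one_def)
  also have "\<dots> = 0"
    by (simp add: one_def dform_fun_form[OF R] form_inner_def)
  finally show ?thesis .
qed

end
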